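(* For all integers $n\ge1$ and $q\ge0$, $(q+1)^n-(n+1)q^n \le A(n,q)\le (q+1)^n$.
   Context: $A(n,q)$ is the Eulerian number, the number of permutations of $\{1,\dots,n\}$ with exactly $q$ ascents, with $A(n,q)=0$ if $q\ge n$. *)

theory Defs
  imports Main "HOL-Combinatorics.Multiset_Permutations"
begin

definition ascents :: "nat list \<Rightarrow> nat" where
  "ascents xs = card {i. Suc i < length xs \<and> xs ! i < xs ! Suc i}"

definition eulerian :: "nat \<Rightarrow> nat \<Rightarrow> nat" where
  "eulerian n q = card {xs \<in> permutations_of_set {1..n}. ascents xs = q}"

end

theory Submission
  imports Defs
begin

(* Inserting the largest letter into one of the n + 1 gaps of a permutation p of n letters
   with a ascents creates no new ascent in a + 1 gaps (the front and the gaps inside ascents)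
   and exactly one in the remaining n - a gaps. Together with a binomial identity this gives
   Worpitzky's identity (x + 1)^n = \<Sum>\<^sub>p C(x + n - asc p, n) by induction on n.
   At x = q the permutations with q ascents contribute 1 each and those with more contribute 0,
   whence A(n,q) \<le> (q + 1)^n. Those with fewer ascents satisfy
   C(q + n - a, n) \<le> (n + 1) C(q - 1 + n - a, n), and Worpitzky's identity at x = q - 1
   bounds their total by (n + 1) q^n. *)

lemma ascents_Nil [simp]: "ascents [] = 0"
  by (simp add: ascents_def)

lemma ascents_singleton [simp]: "ascents [x] = 0"
  by (simp add: ascents_def)

lemma ascents_Cons_Cons [simp]:
  "ascents (x # y # zs) = (if x < y then 1 else 0) + ascents (y # zs)"
proof -
  let ?A = "\<lambda>xs. {i. Suc i < length xs \<and> xs ! i < xs ! Suc i}"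
  have "?A (x # y # zs) = (if x < y then {0} else {}) \<union> Suc ` ?A (y # zs)"
    by (auto simp: less_Suc_eq_0_disj)
  moreover have "finite (?A (y # zs))"
    by (rule finite_subset[of _ "{..<length (y # zs)}"]) auto
  ultimately show ?thesis
    by (simp add: ascents_def card_Un_disjoint card_image)
qed

lemma ascents_le_length: "ascents xs \<le> length xs"
proof -
  have "ascents xs \<le> card {..<length xs}"
    unfolding ascents_def by (rule card_mono) auto
  then show ?thesis by simp
qed

lemma ascents_insert_max:
  assumes "\<forall>z \<in> set ys \<union> set zs. z < m"
  shows "ascents (ys @ m # zs) =
    ascents (ys @ zs) + (if ys \<noteq> [] \<and> \<not> (zs \<noteq> [] \<and> last ys < hd zs) then 1 else 0)"
  using assms
proof (induction ys rule: induct_list012)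
  case 1
  then show ?case by (cases zs) auto
next
  case (2 y)
  then show ?case by (cases zs) auto
next
  case (3 y y' ys)
  then show ?case by auto
qed

definition insert_at :: "nat \<Rightarrow> 'a \<Rightarrow> 'a list \<Rightarrow> 'a list" where
  "insert_at i x xs = take i xs @ x # drop i xs"

lemma set_insert_at [simp]: "set (insert_at i x xs) = insert x (set xs)"
proof -
  have "set (take i xs) \<union> set (drop i xs) = set xs"
    by (metis append_take_drop_id set_append)
  then show ?thesis unfolding insert_at_def by auto
qed

lemma distinct_insert_at [simp]:
  "distinct (insert_at i x xs) \<longleftrightarrow> distinct xs \<and> x \<notin> set xs"
proof -
  have "distinct (take i xs) \<and> distinct (drop i xs) \<and> set (take i xs) \<inter> set (drop i xs) = {}
          \<longleftrightarrow> distinct xs"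
    by (metis append_take_drop_id distinct_append)
  moreover have "set (take i xs) \<union> set (drop i xs) = set xs"
    by (metis append_take_drop_id set_append)
  ultimately show ?thesis
    unfolding insert_at_def distinct_append by auto
qed

lemma bij_betw_insert_at_permutations:
  assumes "finite A" "m \<notin> A"
  shows "bij_betw (\<lambda>(p, i). insert_at i m p)
           (permutations_of_set A \<times> {0..card A}) (permutations_of_set (insert m A))"
proof (rule bij_betw_byWitness)
  let ?split = "\<lambda>xs. (remove1 m xs, length (takeWhile (\<lambda>x. x \<noteq> m) xs))"
  have "?split (insert_at i m p) = (p, i)"
    if p: "p \<in> permutations_of_set A" and "i \<le> card A" for p i
  proof -
    have "i \<le> length p" "m \<notin> set p"
      using that assms(2) length_finite_permutations_of_set[OF p] permutations_of_setD(1)[OF p]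
      by auto
    then have "m \<notin> set (take i p)" by (auto dest: in_set_takeD)
    then have "takeWhile (\<lambda>x. x \<noteq> m) (insert_at i m p) = take i p"
      unfolding insert_at_def by (auto simp: takeWhile_tail takeWhile_eq_all_conv)
    then show ?thesis
      using \<open>i \<le> length p\<close> \<open>m \<notin> set (take i p)\<close> by (auto simp: insert_at_def remove1_append)
  qed
  then show "\<forall>pi \<in> permutations_of_set A \<times> {0..card A}.
               ?split ((\<lambda>(p, i). insert_at i m p) pi) = pi"
    by auto
  show "\<forall>xs \<in> permutations_of_set (insert m A).
          (\<lambda>(p, i). insert_at i m p) (?split xs) = xs"
  proof
    fix xs assume "xs \<in> permutations_of_set (insert m A)"
    then have "m \<in> set xs" by (auto dest: permutations_of_setD)
    then obtain ys zs where "xs = ys @ m # zs" "m \<notin> set ys"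
      using split_list_first by metis
    moreover from \<open>m \<notin> set ys\<close> have "takeWhile (\<lambda>x. x \<noteq> m) ys = ys"
      by (auto simp: takeWhile_eq_all_conv)
    ultimately show "(\<lambda>(p, i). insert_at i m p) (?split xs) = xs"
      by (simp add: insert_at_def remove1_append takeWhile_tail)
  qed
  show "(\<lambda>(p, i). insert_at i m p) ` (permutations_of_set A \<times> {0..card A})
          \<subseteq> permutations_of_set (insert m A)"
  proof clarify
    fix p i assume "p \<in> permutations_of_set A"
    then have "set p = A" "distinct p" by (auto dest: permutations_of_setD)
    then show "insert_at i m p \<in> permutations_of_set (insert m A)"
      using assms(2) by (intro permutations_of_setI) auto
  qed
  show "?split ` permutations_of_set (insert m A) \<subseteq> permutations_of_set A \<times> {0..card A}"
  proof (rule image_subsetI)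
    fix xs assume xs: "xs \<in> permutations_of_set (insert m A)"
    then have set_xs: "set xs = insert m A" and "distinct xs" by (auto dest: permutations_of_setD)
    then have "remove1 m xs \<in> permutations_of_set A"
      using assms(2) by (intro permutations_of_setI) auto
    moreover have "length (takeWhile (\<lambda>x. x \<noteq> m) xs) \<le> card A"
    proof -
      have "m \<in> set xs" using set_xs by simp
      then have "length (takeWhile (\<lambda>x. x \<noteq> m) xs) < length xs"
        by (induction xs) auto
      also have "length xs = Suc (card A)"
        using xs assms by (simp add: length_finite_permutations_of_set)
      finally show ?thesis by simp
    qed
    ultimately show "?split xs \<in> permutations_of_set A \<times> {0..card A}"
      by simp
  qed
qed

(* Slot i is the gap in front of p ! i; slot length p is the end of the list. *)
definition ascent_slot :: "nat list \<Rightarrow> nat \<Rightarrow> bool" where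
  "ascent_slot p i \<longleftrightarrow> i = 0 \<or> (i < length p \<and> p ! (i - 1) < p ! i)"

lemma ascents_insert_at:
  assumes "\<forall>z \<in> set p. z < m" and "i \<le> length p"
  shows "ascents (insert_at i m p) = ascents p + (if ascent_slot p i then 0 else 1)"
proof -
  have "\<forall>z \<in> set (take i p) \<union> set (drop i p). z < m"
    using assms(1) by (auto dest: in_set_takeD in_set_dropD)
  moreover have "take i p \<noteq> [] \<longleftrightarrow> 0 < i" and "drop i p \<noteq> [] \<longleftrightarrow> i < length p"
    using assms(2) by auto
  moreover have "last (take i p) = p ! (i - 1)" if "0 < i"
    using that assms(2) by (subst last_conv_nth) (auto simp: min_def)
  moreover have "hd (drop i p) = p ! i" if "i < length p"
    using that by (simp add: hd_drop_conv_nth)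
  ultimately show ?thesis
    unfolding insert_at_def ascent_slot_def
    by (auto simp: ascents_insert_max simp del: take_eq_Nil drop_eq_Nil)
qed

lemma card_ascent_slots: "card {i \<in> {0..length p}. ascent_slot p i} = Suc (ascents p)"
proof -
  let ?A = "{j. Suc j < length p \<and> p ! j < p ! Suc j}"
  have "{i \<in> {0..length p}. ascent_slot p i} = insert 0 (Suc ` ?A)" (is "?L = ?R")
  proof
    show "?L \<subseteq> ?R"
    proof
      fix i assume "i \<in> ?L"
      then show "i \<in> ?R" by (cases i) (auto simp: ascent_slot_def)
    qed
    show "?R \<subseteq> ?L" by (auto simp: ascent_slot_def)
  qed
  moreover have "finite ?A"
    by (rule finite_subset[of _ "{..<length p}"]) auto
  ultimately show ?thesis
    by (simp add: card_image ascents_def)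
qed

lemma card_non_ascent_slots:
  "card {i \<in> {0..length p}. \<not> ascent_slot p i} = length p - ascents p"
proof -
  have "{i \<in> {0..length p}. \<not> ascent_slot p i}
          = {0..length p} - {i \<in> {0..length p}. ascent_slot p i}"
    by auto
  also have "card \<dots> = card {0..length p} - card {i \<in> {0..length p}. ascent_slot p i}"
    by (rule card_Diff_subset) auto
  finally show ?thesis
    using card_ascent_slots[of p] by simp
qed

lemma Suc_times_binomial_Suc: "Suc k * (n choose Suc k) = (n - k) * (n choose k)"
  by (simp only: binomial_absorption binomial_absorb_comp)

lemma binomial_Suc_le: "n \<le> m \<Longrightarrow> (Suc m choose n) \<le> Suc n * (m choose n)"
proof (cases n)
  case (Suc k)
  assume "n \<le> m"
  then have "(m choose k) \<le> (m - k) * (m choose k)"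
    using Suc by simp
  also have "\<dots> = Suc k * (m choose Suc k)"
    by (rule Suc_times_binomial_Suc[symmetric])
  finally show ?thesis
    using Suc by simp
qed simp

lemma worpitzky_binomial_step:
  assumes "a \<le> n"
  shows "Suc a * (x + Suc n - a choose Suc n) + (n - a) * (x + n - a choose Suc n)
           = Suc x * (x + n - a choose n)"
proof (cases "a \<le> x")
  case True
  define k where "k = x + n - a"
  have "x + Suc n - a = Suc k" "n \<le> k" "Suc x = Suc a + (k - n)"
    using assms True by (auto simp: k_def)
  then have "Suc a * (x + Suc n - a choose Suc n) + (n - a) * (x + n - a choose Suc n)
      = Suc a * (k choose n) + Suc n * (k choose Suc n)"
    using assms by (simp add: k_def algebra_simps)
  also have "\<dots> = Suc x * (k choose n)"
    using \<open>Suc x = Suc a + (k - n)\<close> by (simp only: Suc_times_binomial_Suc algebra_simps)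
  finally show ?thesis
    by (simp add: k_def)
next
  case False
  then show ?thesis
    using assms by (simp add: binomial_eq_0)
qed

lemma sum_over_slots:
  assumes "length p = n"
  shows "(\<Sum>i \<in> {0..n}. f (ascents p + (if ascent_slot p i then 0 else 1)))
           = Suc (ascents p) * f (ascents p) + (n - ascents p) * f (Suc (ascents p))"
proof -
  have "(\<Sum>i \<in> {0..length p}. f (ascents p + (if ascent_slot p i then 0 else 1)))
      = (\<Sum>i \<in> {i \<in> {0..length p}. ascent_slot p i}. f (ascents p))
        + (\<Sum>i \<in> {i \<in> {0..length p}. \<not> ascent_slot p i}. f (Suc (ascents p)))"
    by (simp add: if_distrib sum.If_cases Int_def)
  then show ?thesis
    using assms card_ascent_slots[of p] card_non_ascent_slots[of p] by simp
qed

theorem worpitzky_permutations: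
  assumes "finite A"
  shows "Suc x ^ card A = (\<Sum>p \<in> permutations_of_set A. (x + card A - ascents p choose card A))"
  using assms
proof (induction A rule: finite_linorder_max_induct)
  case empty
  then show ?case by simp
next
  case (insert m A)
  let ?n = "card A"
  have m: "m \<notin> A" "card (insert m A) = Suc ?n"
    using insert by auto
  have length_p: "length p = ?n" and ascents_p: "ascents p \<le> ?n"
    and below_m: "\<forall>z \<in> set p. z < m"
    if "p \<in> permutations_of_set A" for p
    using that insert.hyps(2) ascents_le_length[of p]
    by (auto simp: length_finite_permutations_of_set dest: permutations_of_setD)
  have "(\<Sum>xs \<in> permutations_of_set (insert m A). (x + Suc ?n - ascents xs choose Suc ?n))
      = (\<Sum>(p, i) \<in> permutations_of_set A \<times> {0..?n}.
           (x + Suc ?n - ascents (insert_at i m p) choose Suc ?n))"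
    using bij_betw_insert_at_permutations[OF insert.hyps(1) m(1)]
    by (simp add: sum.reindex_bij_betw[symmetric] case_prod_unfold)
  also have "\<dots> = (\<Sum>p \<in> permutations_of_set A. \<Sum>i \<in> {0..?n}.
                 (x + Suc ?n - (ascents p + (if ascent_slot p i then 0 else 1)) choose Suc ?n))"
    unfolding sum.cartesian_product[symmetric]
    by (intro sum.cong) (auto simp: length_p ascents_insert_at below_m)
  also have "\<dots> = (\<Sum>p \<in> permutations_of_set A.
                 Suc (ascents p) * (x + Suc ?n - ascents p choose Suc ?n)
                 + (?n - ascents p) * (x + ?n - ascents p choose Suc ?n))"
    using sum_over_slots[OF length_p, where f = "\<lambda>a. x + Suc ?n - a choose Suc ?n"]
    by (intro sum.cong refl) simp
  also have "\<dots> = (\<Sum>p \<in> permutations_of_set A. Suc x * (x + ?n - ascents p choose ?n))"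
    by (intro sum.cong refl worpitzky_binomial_step ascents_p)
  also have "\<dots> = Suc x ^ Suc ?n"
    unfolding sum_distrib_left[symmetric] insert.IH[symmetric] by simp
  finally show ?case
    by (simp add: m(2))
qed

lemma binomial_Suc_shift_le:
  assumes "a \<noteq> Suc r"
  shows "(Suc r + n - a choose n) \<le> Suc n * (r + n - a choose n)"
proof (cases "a \<le> r")
  case True
  then have "Suc r + n - a = Suc (r + n - a)" "n \<le> r + n - a"
    by auto
  then show ?thesis
    using binomial_Suc_le by presburger
next
  case False
  with assms have "Suc r < a"
    by simp
  then have "Suc r + n - a < n" if "n \<noteq> 0"
    using that by simp
  then show ?thesis
    by (cases "n = 0") (simp_all add: binomial_eq_0)
qed

lemma worpitzky_eulerian:
  "Suc q ^ n = eulerian n q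
     + (\<Sum>p \<in> {p \<in> permutations_of_set {1..n}. ascents p \<noteq> q}. (q + n - ascents p choose n))"
proof -
  let ?P = "permutations_of_set {1..n}" and ?g = "\<lambda>p. q + n - ascents p choose n"
  have "Suc q ^ n = (\<Sum>p \<in> ?P. ?g p)"
    using worpitzky_permutations[of "{1..n}" q] by simp
  also have "\<dots> = (\<Sum>p \<in> ?P \<inter> {p. ascents p = q}. ?g p)
                   + (\<Sum>p \<in> ?P - {p. ascents p = q}. ?g p)"
    by (rule sum.Int_Diff) simp
  also have "(\<Sum>p \<in> ?P \<inter> {p. ascents p = q}. ?g p) = eulerian n q"
    by (simp add: eulerian_def Int_def conj_commute)
  also have "?P - {p. ascents p = q} = {p \<in> ?P. ascents p \<noteq> q}"
    by auto
  finally show ?thesis .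
qed

lemma eulerian_le_Suc_power: "eulerian n q \<le> Suc q ^ n"
  using worpitzky_eulerian[of q n] by linarith

lemma Suc_power_le_eulerian: "Suc q ^ n \<le> eulerian n q + Suc n * q ^ n"
proof -
  let ?P = "permutations_of_set {1..n}"
  have "(\<Sum>p \<in> {p \<in> ?P. ascents p \<noteq> q}. (q + n - ascents p choose n)) \<le> Suc n * q ^ n"
  proof (cases q)
    case 0
    have "(q + n - ascents p choose n) = 0" if "p \<in> ?P" "ascents p \<noteq> q" for p
    proof -
      have "0 < ascents p" "ascents p \<le> n"
        using that 0 ascents_le_length[of p] length_finite_permutations_of_set[OF that(1)] by auto
      then show ?thesis
        using 0 by (simp add: binomial_eq_0)
    qed
    then show ?thesis
      by (subst sum.neutral) auto
  next
    case (Suc r)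
    have "(\<Sum>p \<in> {p \<in> ?P. ascents p \<noteq> q}. (q + n - ascents p choose n))
        \<le> (\<Sum>p \<in> {p \<in> ?P. ascents p \<noteq> q}. Suc n * (r + n - ascents p choose n))"
      using Suc binomial_Suc_shift_le by (intro sum_mono) simp
    also have "\<dots> \<le> (\<Sum>p \<in> ?P. Suc n * (r + n - ascents p choose n))"
      by (intro sum_mono2) auto
    also have "\<dots> = Suc n * q ^ n"
      using worpitzky_permutations[of "{1..n}" r] Suc by (simp add: sum_distrib_left)
    finally show ?thesis .
  qed
  then show ?thesis
    using worpitzky_eulerian[of q n] by linarith
qed

theorem mainTheorem18:
  fixes n q :: nat
  assumes "n \<ge> 1"
  shows "(int q + 1) ^ n - (int n + 1) * int q ^ n \<le> int (eulerian n q)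
         \<and> int (eulerian n q) \<le> (int q + 1) ^ n"
proof
  \<comment> \<open>The bounds also hold for \<open>n = 0\<close>.\<close>
  have "int (Suc q ^ n) \<le> int (eulerian n q + Suc n * q ^ n)"
    using Suc_power_le_eulerian by (simp only: of_nat_le_iff)
  then show "(int q + 1) ^ n - (int n + 1) * int q ^ n \<le> int (eulerian n q)"
    by (simp add: algebra_simps)
  have "int (eulerian n q) \<le> int (Suc q ^ n)"
    using eulerian_le_Suc_power by (simp only: of_nat_le_iff)
  then show "int (eulerian n q) \<le> (int q + 1) ^ n"
    by (simp add: add.commute)
qed

end
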